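(* Let $A$ be an Archimedean semiprime $f$-algebra with a multiplicative unit $e$. Then $A$ is bounded quasi-inversion closed if and only if $A$ is bounded inversion closed.
   Context: An $f$-algebra is a real associative algebra that is a vector lattice with $A_+A_+\subseteq A_+$ and such that $a\wedge b=0$ implies $ac\wedge b=ca\wedge b=0$ for all $c\in A_+$; it is semiprime if $0$ is its only nilpotent element. An element $a\in A$ is quasi-invertible if there is $a^\ast\in A$ with $a+a^\ast=aa^\ast$; $Q(A)$ denotes the set of such elements. $A$ is bounded quasi-inversion closed if for every $a\in A$, $|a|\le|a^2-a|$ implies $a\in Q(A)$. A unital $A$ is bounded inversion closed if every $a\in A$ with $e\le a$ has a multiplicative inverse in $A$. *)

theory Defs
  imports Main "HOL.Real_Vector_Spaces"
begin

text \<open>Ambient structure: a real associative unital algebra (real_algebra_1, unit e = 1)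
whose order is a lattice order compatible with the vector structure
(ordered_real_vector + lattice), i.e. a vector lattice.\<close>

definition vl_abs :: "'a::{lattice, uminus} \<Rightarrow> 'a" where
  "vl_abs a = sup a (- a)"

definition f_algebra :: "'a::{real_algebra_1, ordered_real_vector, lattice} itself \<Rightarrow> bool" where
  "f_algebra _ \<longleftrightarrow>
     (\<forall>a b::'a. 0 \<le> a \<longrightarrow> 0 \<le> b \<longrightarrow> 0 \<le> a * b) \<and>
     (\<forall>a b c::'a. inf a b = 0 \<longrightarrow> 0 \<le> c \<longrightarrow> inf (a * c) b = 0 \<and> inf (c * a) b = 0)"

definition semiprime :: "'a::{real_algebra_1, ordered_real_vector, lattice} itself \<Rightarrow> bool" where
  "semiprime _ \<longleftrightarrow> (\<forall>a::'a. (\<exists>n::nat. a ^ n = 0) \<longrightarrow> a = 0)"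

definition archimedean_vl :: "'a::{real_algebra_1, ordered_real_vector, lattice} itself \<Rightarrow> bool" where
  "archimedean_vl _ \<longleftrightarrow> (\<forall>a b::'a. 0 \<le> a \<longrightarrow> (\<forall>n::nat. real n *\<^sub>R a \<le> b) \<longrightarrow> a = 0)"

definition quasi_invertible :: "'a::{real_algebra_1} \<Rightarrow> bool" where
  "quasi_invertible a \<longleftrightarrow> (\<exists>a'. a + a' = a * a')"

definition bounded_quasi_inversion_closed ::
  "'a::{real_algebra_1, ordered_real_vector, lattice} itself \<Rightarrow> bool" where
  "bounded_quasi_inversion_closed _ \<longleftrightarrow>
     (\<forall>a::'a. vl_abs a \<le> vl_abs (a * a - a) \<longrightarrow> quasi_invertible a)"

definition bounded_inversion_closed ::
  "'a::{real_algebra_1, ordered_real_vector, lattice} itself \<Rightarrow> bool" where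
  "bounded_inversion_closed _ \<longleftrightarrow>
     (\<forall>a::'a. 1 \<le> a \<longrightarrow> (\<exists>b. a * b = 1 \<and> b * a = 1))"

end

theory Submission
  imports Defs "HOL-Library.Lattice_Algebras"
begin

text \<open>
  If \<open>1 \<le> a\<close>, then \<open>x = 1 - a\<close> is negative, so \<open>\<bar>x\<bar> = -x \<le> x\<^sup>2 - x\<close>; a quasi-inverse
  \<open>x'\<close> of \<open>x\<close> makes \<open>1 - x'\<close> a right inverse of \<open>a\<close>, and it is two-sided because in an
  \<open>f\<close>-algebra an element \<open>a \<ge> 1\<close> is not a left zero divisor.

  Conversely, suppose \<open>\<bar>a\<bar> \<le> \<bar>a\<^sup>2 - a\<bar> \<le> \<bar>1 - a\<bar> \<bar>a\<bar>\<close> and put \<open>w = (1 - \<bar>1 - a\<bar>)\<^sup>+\<close>.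
  Then \<open>(1 - \<bar>1 - a\<bar>) \<bar>a\<bar> \<le> 0\<close> forces \<open>w \<bar>a\<bar> = 0\<close> by disjointness, while \<open>w \<le> \<bar>a\<bar>\<close>;
  hence \<open>w\<^sup>2 = 0\<close>, and \<open>w = 0\<close> by semiprimeness. So \<open>\<bar>1 - a\<bar> \<ge> 1\<close> is invertible, and as
  \<open>(1 - a)\<^sup>2 = \<bar>1 - a\<bar>\<^sup>2\<close>, the element \<open>1 - a\<close> has a right inverse, i.e. \<open>a\<close> is
  quasi-invertible.
\<close>

lemma quasi_invertible_iff_right_inverse:
  "quasi_invertible x \<longleftrightarrow> (\<exists>y. (1 - x) * y = 1)"
proof
  assume "quasi_invertible x"
  then obtain x' where "x + x' = x * x'"
    unfolding quasi_invertible_def by blast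
  then have "(1 - x) * (1 - x') = 1"
    by (simp add: algebra_simps)
  then show "\<exists>y. (1 - x) * y = 1" ..
next
  assume "\<exists>y. (1 - x) * y = 1"
  then obtain y where "(1 - x) * y = 1" ..
  then have "x + (1 - y) = x * (1 - y)"
    by (simp add: algebra_simps)
  then show "quasi_invertible x"
    unfolding quasi_invertible_def ..
qed

text \<open>The sort \<open>{ordered_ab_group_add, lattice}\<close> is not an instance of
  \<open>lattice_ab_group_add_abs\<close>, so the library's facts on lattice-ordered groups are obtained by
  interpretation, with \<open>vl_abs\<close> as absolute value.\<close>

interpretation vl: lattice_ab_group_add_abs vl_abs "(+)" "0::'a::{ordered_ab_group_add, lattice}"
    "(-)" uminus "(\<le>)" "(<)" inf sup
  by unfold_locales (simp add: vl_abs_def)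

lemma inf_pprt_minus_nprt: "inf (vl.pprt x) (- vl.nprt x) = (0::'a::{ordered_ab_group_add, lattice})"
proof -
  have "sup (vl.pprt x) (- vl.nprt x) = vl_abs x"
    using vl.abs_ge_zero[of x]
    by (simp add: vl.pprt_def vl.nprt_neg[symmetric] vl.nprt_def vl_abs_def sup_aci sup_absorb2)
  then have "vl.pprt x + - vl.nprt x = vl_abs x + inf (vl.pprt x) (- vl.nprt x)"
    by (metis vl.add_eq_inf_sup)
  then show ?thesis
    by (simp add: vl.abs_prts)
qed

context
  assumes f_algebra: "f_algebra TYPE('a::{real_algebra_1, ordered_real_vector, lattice})"
begin

lemma f_algebra_ordered_ring: "class.ordered_ring (+) (-) (0::'a) (\<le>) (<) (*) uminus"
proof -
  have "0 \<le> a * b" if "0 \<le> a" "0 \<le> b" for a b :: 'a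
    using f_algebra that unfolding f_algebra_def by blast
  from this[of c "b - a" for a b c] this[of "b - a" c for a b c]
  show ?thesis
    by unfold_locales (simp_all add: algebra_simps)
qed

interpretation R: ordered_ring "(+)" "(-)" "0::'a" "(\<le>)" "(<)" "(*)" uminus
  by (rule f_algebra_ordered_ring)

lemma f_algebra_inf_mult_eq_0:
  "inf a b = 0 \<Longrightarrow> 0 \<le> c \<Longrightarrow> inf (a * c) b = (0::'a) \<and> inf (c * a) b = 0"
  using f_algebra unfolding f_algebra_def by blast

lemma inf_mult_right_eq_0:
  assumes "inf a b = 0" "0 \<le> c"
  shows "inf (a * c) (b * c) = (0::'a)"
proof -
  have "inf b (a * c) = 0"
    using f_algebra_inf_mult_eq_0[OF assms] by (simp add: inf_commute)
  then show ?thesis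
    using f_algebra_inf_mult_eq_0[OF _ assms(2)] by (simp add: inf_commute)
qed

lemma inf_mult_left_eq_0:
  assumes "inf a b = 0" "0 \<le> c"
  shows "inf (c * a) (c * b) = (0::'a)"
proof -
  have "inf b (c * a) = 0"
    using f_algebra_inf_mult_eq_0[OF assms] by (simp add: inf_commute)
  then show ?thesis
    using f_algebra_inf_mult_eq_0[OF _ assms(2)] by (simp add: inf_commute)
qed

lemma inf_eq_0_imp_mult_eq_0:
  assumes "inf a b = 0"
  shows "a * b = (0::'a)"
proof -
  have "0 \<le> a" "0 \<le> b"
    using assms inf.cobounded1[of a b] inf.cobounded2[of a b] by simp_all
  then have "inf b (a * b) = 0"
    using f_algebra_inf_mult_eq_0[OF assms] by (simp add: inf_commute)
  then have "inf (a * b) (a * b) = 0"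
    using f_algebra_inf_mult_eq_0 \<open>0 \<le> a\<close> by blast
  then show ?thesis
    by simp
qed

lemma pprt_mult_nprt: "vl.pprt x * vl.nprt x = (0::'a)" "vl.nprt x * vl.pprt x = 0"
proof -
  have "inf (- vl.nprt x) (vl.pprt x) = 0"
    using inf_pprt_minus_nprt[of x] by (simp add: inf_commute)
  from inf_eq_0_imp_mult_eq_0[OF this] inf_eq_0_imp_mult_eq_0[OF inf_pprt_minus_nprt[of x]]
  show "vl.pprt x * vl.nprt x = 0" "vl.nprt x * vl.pprt x = 0"
    by simp_all
qed

lemma vl_abs_mult_self: "vl_abs x * vl_abs x = (x::'a) * x"
proof -
  have "(vl.pprt x - vl.nprt x) * (vl.pprt x - vl.nprt x)
      = (vl.pprt x + vl.nprt x) * (vl.pprt x + vl.nprt x)"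
    by (simp add: algebra_simps pprt_mult_nprt)
  then show ?thesis
    by (simp flip: vl.abs_prts vl.prts)
qed

lemma mult_self_nonneg: "0 \<le> (x::'a) * x"
  using R.mult_nonneg_nonneg[OF vl.abs_ge_zero vl.abs_ge_zero, of x x] by (simp add: vl_abs_mult_self)

text \<open>The library's \<open>abs_le_mult\<close> is stated for the type class \<open>lattice_ring\<close> only.\<close>

lemma vl_abs_mult_le: "vl_abs (x * y) \<le> vl_abs x * vl_abs (y::'a)"
proof -
  define p n q m where "p = vl.pprt x" "n = vl.nprt x" "q = vl.pprt y" "m = vl.nprt y"
  have sign: "0 \<le> p * q" "0 \<le> n * m" "p * m \<le> 0" "n * q \<le> 0"
    unfolding p_n_q_m_def
    by (simp_all add: R.mult_nonneg_nonneg R.mult_nonpos_nonpos R.mult_nonneg_nonpos R.mult_nonpos_nonneg)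
  have "x * y = (p + n) * (q + m)"
    unfolding p_n_q_m_def by (simp flip: vl.prts)
  moreover have "vl_abs x * vl_abs y = (p - n) * (q - m)"
    unfolding p_n_q_m_def by (simp flip: vl.abs_prts)
  ultimately have
    "vl_abs x * vl_abs y - x * y = (- (p * m) + - (n * q)) + (- (p * m) + - (n * q))"
    "vl_abs x * vl_abs y - - (x * y) = (p * q + n * m) + (p * q + n * m)"
    by (simp_all add: algebra_simps)
  moreover have "0 \<le> - (p * m) + - (n * q)" "0 \<le> p * q + n * m"
    by (intro add_nonneg_nonneg; simp add: sign)+
  ultimately have "0 \<le> vl_abs x * vl_abs y - x * y" "0 \<le> vl_abs x * vl_abs y - - (x * y)"
    by (simp_all only: add_nonneg_nonneg)
  then show ?thesis
    by (intro vl.abs_leI) (simp_all only: diff_ge_0_iff_ge)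
qed

lemma one_nonneg: "0 \<le> (1::'a)"
  using mult_self_nonneg[of 1] by simp

lemma one_le_imp_mult_eq_0_iff:
  assumes "1 \<le> a"
  shows "a * x = 0 \<longleftrightarrow> x = (0::'a)"
proof
  assume ax: "a * x = 0"
  define u v where "u = vl.pprt x" "v = - vl.nprt x"
  have uv: "0 \<le> u" "0 \<le> v" "inf u v = 0"
    unfolding u_v_def by (simp_all add: inf_pprt_minus_nprt)
  have a_nonneg: "0 \<le> a"
    using assms one_nonneg by order
  have x: "x = u - v"
    unfolding u_v_def by (simp flip: vl.prts)
  then have "a * u = a * v"
    using ax by (simp add: right_diff_distrib)
  moreover have "inf (a * u) (a * v) = 0"
    using inf_mult_left_eq_0 uv a_nonneg by blast
  ultimately have "a * u = 0" "a * v = 0"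
    by simp_all
  moreover have "u \<le> a * u" "v \<le> a * v"
    using R.mult_right_mono[OF assms] uv by (metis mult_1_left)+
  ultimately have "u = 0" "v = 0"
    using uv by simp_all
  then show "x = 0"
    using x by simp
qed simp

lemma one_le_right_inverse_imp_left_inverse:
  assumes "1 \<le> a" "a * b = 1"
  shows "b * a = (1::'a)"
proof -
  have "a * (1 - b * a) = 0"
    using assms(2) by (simp add: algebra_simps flip: mult.assoc)
  then show ?thesis
    using one_le_imp_mult_eq_0_iff[OF assms(1)] by simp
qed

lemma nonpos_imp_vl_abs_le_vl_abs_mult_self_diff:
  assumes "x \<le> 0"
  shows "vl_abs x \<le> vl_abs (x * x - (x::'a))"
proof -
  have "vl_abs x = - x"
    using assms by (simp add: vl.abs_of_nonpos)
  also have "\<dots> \<le> x * x - x"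
    using mult_self_nonneg[of x] by simp
  also have "\<dots> \<le> vl_abs (x * x - x)"
    by (rule vl.abs_ge_self)
  finally show ?thesis .
qed

lemma mult_nonpos_imp_pprt_mult_eq_0:
  assumes "0 \<le> b" "c * b \<le> 0"
  shows "vl.pprt c * b = (0::'a)"
proof -
  have "c = vl.pprt c - (- vl.nprt c)"
    by (simp flip: vl.prts)
  then have "vl.pprt c * b \<le> (- vl.nprt c) * b"
    using assms(2) by (metis left_diff_distrib diff_le_0_iff_le)
  moreover have "inf (vl.pprt c * b) (- vl.nprt c * b) = 0"
    using inf_mult_right_eq_0[OF inf_pprt_minus_nprt assms(1)] .
  ultimately show ?thesis
    by (simp add: inf_absorb1)
qed

lemma semiprime_imp_one_le_vl_abs_one_minus:
  assumes "semiprime TYPE('a)" and bound: "vl_abs a \<le> vl_abs (a * a - a)"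
  shows "1 \<le> vl_abs (1 - a::'a)"
proof -
  define t w where "t = vl_abs (1 - a)" "w = vl.pprt (1 - t)"
  have "vl_abs a \<le> t * vl_abs a"
  proof -
    have "vl_abs (a * a - a) = vl_abs ((1 - a) * a)"
      by (metis vl.abs_minus_cancel minus_diff_eq left_diff_distrib mult_1_left)
    then show ?thesis
      using bound vl_abs_mult_le[of "1 - a" a] unfolding t_w_def by order
  qed
  then have "w * vl_abs a = 0"
    unfolding t_w_def by (intro mult_nonpos_imp_pprt_mult_eq_0) (simp_all add: algebra_simps)
  moreover have "w \<le> vl_abs a"
  proof -
    have "1 - t \<le> a"
      using vl.abs_ge_self[of "1 - a"] unfolding t_w_def by (simp add: algebra_simps)
    then have "1 - t \<le> vl_abs a"
      using vl.abs_ge_self[of a] by order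
    then show ?thesis
      unfolding t_w_def vl.pprt_def by simp
  qed
  ultimately have "w * w \<le> 0"
    using R.mult_left_mono[of w "vl_abs a" w] unfolding t_w_def by simp
  then have "w ^ 2 = 0"
    using mult_self_nonneg[of w] by (simp add: power2_eq_square)
  then have "w = 0"
    using assms(1) unfolding semiprime_def by blast
  then show ?thesis
    unfolding t_w_def by (simp add: vl.le_zero_iff_zero_pprt[symmetric])
qed

lemma bounded_quasi_inversion_closed_imp_bounded_inversion_closed:
  assumes "bounded_quasi_inversion_closed TYPE('a)"
  shows "bounded_inversion_closed TYPE('a)"
  unfolding bounded_inversion_closed_def
proof (intro allI impI)
  fix a :: 'a
  assume "1 \<le> a"
  then have "vl_abs (1 - a) \<le> vl_abs ((1 - a) * (1 - a) - (1 - a))"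
    by (intro nonpos_imp_vl_abs_le_vl_abs_mult_self_diff) simp
  then obtain b where "a * b = 1"
    using assms unfolding bounded_quasi_inversion_closed_def quasi_invertible_iff_right_inverse
    by auto
  then show "\<exists>b. a * b = 1 \<and> b * a = 1"
    using one_le_right_inverse_imp_left_inverse[OF \<open>1 \<le> a\<close>] by blast
qed

lemma bounded_inversion_closed_imp_bounded_quasi_inversion_closed:
  assumes "semiprime TYPE('a)" and invertible: "bounded_inversion_closed TYPE('a)"
  shows "bounded_quasi_inversion_closed TYPE('a)"
  unfolding bounded_quasi_inversion_closed_def
proof (intro allI impI)
  fix a :: 'a
  assume "vl_abs a \<le> vl_abs (a * a - a)"
  then have "1 \<le> vl_abs (1 - a)"
    using semiprime_imp_one_le_vl_abs_one_minus[OF assms(1)] by blast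
  then obtain s where s: "vl_abs (1 - a) * s = 1"
    using invertible unfolding bounded_inversion_closed_def by blast
  have "(1 - a) * ((1 - a) * s * s) = (vl_abs (1 - a) * vl_abs (1 - a)) * s * s"
    by (simp add: vl_abs_mult_self mult.assoc)
  also have "\<dots> = vl_abs (1 - a) * (vl_abs (1 - a) * s) * s"
    by (simp add: mult.assoc)
  also have "\<dots> = 1"
    using s by simp
  finally show "quasi_invertible a"
    unfolding quasi_invertible_iff_right_inverse by blast
qed

end

theorem theorem2:
  assumes "f_algebra TYPE('a::{real_algebra_1, ordered_real_vector, lattice})"
    and "archimedean_vl TYPE('a)"
    and "semiprime TYPE('a)"
  shows "bounded_quasi_inversion_closed TYPE('a) \<longleftrightarrow> bounded_inversion_closed TYPE('a)"
  using bounded_quasi_inversion_closed_imp_bounded_inversion_closed[OF assms(1)]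
    bounded_inversion_closed_imp_bounded_quasi_inversion_closed[OF assms(1,3)]
  by blast

end
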